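(* Let $\mathcal{Y}=\{1,\dots,m\}$ be a finite set of classes and let $\Delta(\mathcal{Y})$ denote the set of probability vectors on $\mathcal{Y}$. Let $u:\mathcal{Y}\times\mathcal{Y}\to\mathbb{R}_+$ be a nonnegative utility function that is nondegenerate, i.e. for every $y\in\mathcal{Y}$ there exists $a\in\mathcal{Y}$ with $u(a,y)>0$. Let $\ell:\Delta(\mathcal{Y})\times\mathcal{Y}\to\mathbb{R}$ be a strictly proper loss function, i.e. for every $q\in\Delta(\mathcal{Y})$, $q$ is the unique minimizer over $p\in\Delta(\mathcal{Y})$ of $\bar\ell(p,q)\equiv\sum_{y\in\mathcal{Y}} q_y\,\ell(p,y)$. Define the utility-weighted loss $\ell^u(p,y)\equiv\sum_{y'\in\mathcal{Y}}\ell(p,y')\,u(y',y)$ and its expectation $\bar\ell^u(p,q)\equiv\sum_{y\in\mathcal{Y}} q_y\,\ell^u(p,y)$, and the expected utility $\bar u(y,q)\equiv\sum_{y'\in\mathcal{Y}}u(y,y')\,q_{y'}$. Then for every $q\in\Delta(\mathcal{Y})$, the problem $\min_{p\in\Delta(\mathcal{Y})}\bar\ell^u(p,q)$ has a unique minimizer $p^u(q)$, given for each class $y$ by $$p^u_y(q)=\frac{\bar u(y,q)}{\sum_{y'\in\mathcal{Y}}\bar u(y',q)}.$$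
   Context: $p_y,q_y$ denote the $y$-th components of probability vectors $p,q\in\Delta(\mathcal{Y})$. *)

theory Defs
  imports "HOL-Analysis.Analysis"
begin

text \<open>Classes are Y = {1..m}. A probability vector is a function nat => real,
nonnegative, summing to 1 over {1..m}, and zero outside {1..m}
(so that each element of Delta(Y) has a unique representation).\<close>

definition prob_simplex :: "nat \<Rightarrow> (nat \<Rightarrow> real) set" where
  "prob_simplex m = {p. (\<forall>y\<in>{1..m}. 0 \<le> p y) \<and> (\<forall>y. y \<notin> {1..m} \<longrightarrow> p y = 0)
                        \<and> (\<Sum>y\<in>{1..m}. p y) = 1}"

definition exp_loss :: "nat \<Rightarrow> ((nat \<Rightarrow> real) \<Rightarrow> nat \<Rightarrow> real) \<Rightarrow> (nat \<Rightarrow> real) \<Rightarrow> (nat \<Rightarrow> real) \<Rightarrow> real" where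
  "exp_loss m l p q = (\<Sum>y\<in>{1..m}. q y * l p y)"

definition strictly_proper :: "nat \<Rightarrow> ((nat \<Rightarrow> real) \<Rightarrow> nat \<Rightarrow> real) \<Rightarrow> bool" where
  "strictly_proper m l \<longleftrightarrow> (\<forall>q\<in>prob_simplex m. \<forall>p\<in>prob_simplex m.
       p \<noteq> q \<longrightarrow> exp_loss m l q q < exp_loss m l p q)"

definition util_loss :: "nat \<Rightarrow> ((nat \<Rightarrow> real) \<Rightarrow> nat \<Rightarrow> real) \<Rightarrow> (nat \<Rightarrow> nat \<Rightarrow> real) \<Rightarrow> (nat \<Rightarrow> real) \<Rightarrow> nat \<Rightarrow> real" where
  "util_loss m l u p y = (\<Sum>y'\<in>{1..m}. l p y' * u y' y)"

definition exp_util :: "nat \<Rightarrow> (nat \<Rightarrow> nat \<Rightarrow> real) \<Rightarrow> nat \<Rightarrow> (nat \<Rightarrow> real) \<Rightarrow> real" where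
  "exp_util m u y q = (\<Sum>y'\<in>{1..m}. u y y' * q y')"

end

theory Submission
  imports Defs
begin

text \<open>Exchanging the two sums shows that the expected utility-weighted loss under \<open>q\<close> is the
  plain expected loss under the unnormalised weights \<open>exp_util m u y q\<close>. These weights have
  positive total mass (some class has \<open>q\<^sub>y > 0\<close> and nondegeneracy gives it positive
  utility), so normalising them only scales the objective by a positive constant; the
  minimisers are therefore those of the expected loss under the normalised vector, and strict
  properness makes that vector the unique one.\<close>

definition util_prob :: "nat \<Rightarrow> (nat \<Rightarrow> nat \<Rightarrow> real) \<Rightarrow> (nat \<Rightarrow> real) \<Rightarrow> nat \<Rightarrow> real" where
  "util_prob m u q y =
     (if y \<in> {1..m} then exp_util m u y q / (\<Sum>y'\<in>{1..m}. exp_util m u y' q) else 0)"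

lemma exp_loss_scale: "exp_loss m l p (\<lambda>y. c * r y) = c * exp_loss m l p r"
  by (simp add: exp_loss_def sum_distrib_left mult.assoc)

lemma exp_loss_util_loss:
  "exp_loss m (util_loss m l u) p q = exp_loss m l p (\<lambda>y. exp_util m u y q)"
proof -
  have "exp_loss m (util_loss m l u) p q = (\<Sum>y\<in>{1..m}. \<Sum>y'\<in>{1..m}. q y * l p y' * u y' y)"
    by (simp add: exp_loss_def util_loss_def sum_distrib_left mult.assoc)
  also have "\<dots> = (\<Sum>y'\<in>{1..m}. \<Sum>y\<in>{1..m}. q y * l p y' * u y' y)"
    by (rule sum.swap)
  also have "\<dots> = exp_loss m l p (\<lambda>y. exp_util m u y q)"
    by (simp add: exp_loss_def exp_util_def sum_distrib_left mult_ac)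
  finally show ?thesis .
qed

lemma prob_simplex_has_pos:
  assumes "q \<in> prob_simplex m"
  obtains y where "y \<in> {1..m}" "0 < q y"
proof -
  have "\<exists>y\<in>{1..m}. q y \<noteq> 0"
  proof (rule ccontr)
    assume "\<not> (\<exists>y\<in>{1..m}. q y \<noteq> 0)"
    then have "(\<Sum>y\<in>{1..m}. q y) = 0"
      by simp
    then show False
      using assms by (simp add: prob_simplex_def)
  qed
  then show ?thesis
    using assms that by (force simp: prob_simplex_def)
qed

lemma exp_util_nonneg:
  assumes "\<forall>a\<in>{1..m}. \<forall>y\<in>{1..m}. 0 \<le> u a y" "q \<in> prob_simplex m" "y \<in> {1..m}"
  shows "0 \<le> exp_util m u y q"
  using assms unfolding exp_util_def prob_simplex_def by (auto intro!: sum_nonneg)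

lemma sum_exp_util_pos:
  assumes u_nonneg: "\<forall>a\<in>{1..m}. \<forall>y\<in>{1..m}. 0 \<le> u a y"
    and u_nondeg: "\<forall>y\<in>{1..m}. \<exists>a\<in>{1..m}. u a y > 0"
    and q_prob: "q \<in> prob_simplex m"
  shows "0 < (\<Sum>y\<in>{1..m}. exp_util m u y q)"
proof -
  obtain y where y: "y \<in> {1..m}" "0 < q y"
    using q_prob by (rule prob_simplex_has_pos)
  obtain a where a: "a \<in> {1..m}" "0 < u a y"
    using u_nondeg y(1) by blast
  have "0 < u a y * q y"
    using a y by simp
  also have "\<dots> \<le> exp_util m u a q"
    unfolding exp_util_def using u_nonneg q_prob a(1) y(1)
    by (intro member_le_sum) (auto simp: prob_simplex_def)
  also have "\<dots> \<le> (\<Sum>y\<in>{1..m}. exp_util m u y q)"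
    using exp_util_nonneg[OF u_nonneg q_prob] a(1) by (intro member_le_sum) auto
  finally show ?thesis .
qed

lemma util_prob_in_simplex:
  assumes "\<forall>a\<in>{1..m}. \<forall>y\<in>{1..m}. 0 \<le> u a y"
    and "\<forall>y\<in>{1..m}. \<exists>a\<in>{1..m}. u a y > 0"
    and "q \<in> prob_simplex m"
  shows "util_prob m u q \<in> prob_simplex m"
  using exp_util_nonneg[OF assms(1,3)] sum_exp_util_pos[OF assms]
  by (auto simp: prob_simplex_def util_prob_def sum_divide_distrib[symmetric])

lemma exp_loss_util_loss_eq_scaled:
  assumes "0 < (\<Sum>y\<in>{1..m}. exp_util m u y q)"
  shows "exp_loss m (util_loss m l u) p q
           = (\<Sum>y\<in>{1..m}. exp_util m u y q) * exp_loss m l p (util_prob m u q)"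
proof -
  have "exp_loss m l p (\<lambda>y. exp_util m u y q)
          = exp_loss m l p (\<lambda>y. (\<Sum>y\<in>{1..m}. exp_util m u y q) * util_prob m u q y)"
    using assms by (simp add: exp_loss_def util_prob_def)
  then show ?thesis
    by (simp add: exp_loss_util_loss exp_loss_scale)
qed

lemma strictly_proper_minimizer_iff:
  assumes "strictly_proper m l" "q \<in> prob_simplex m" "p \<in> prob_simplex m"
  shows "(\<forall>p'\<in>prob_simplex m. exp_loss m l p q \<le> exp_loss m l p' q) \<longleftrightarrow> p = q"
  using assms unfolding strictly_proper_def by (metis less_le_not_le nle_le)

lemma util_loss_minimizer_iff:
  assumes u_nonneg: "\<forall>a\<in>{1..m}. \<forall>y\<in>{1..m}. 0 \<le> u a y"
    and u_nondeg: "\<forall>y\<in>{1..m}. \<exists>a\<in>{1..m}. u a y > 0"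
    and l_proper: "strictly_proper m l"
    and q_prob: "q \<in> prob_simplex m"
    and p_prob: "p \<in> prob_simplex m"
  shows "(\<forall>p'\<in>prob_simplex m. exp_loss m (util_loss m l u) p q \<le> exp_loss m (util_loss m l u) p' q)
           \<longleftrightarrow> p = util_prob m u q"
proof -
  have S_pos: "0 < (\<Sum>y\<in>{1..m}. exp_util m u y q)"
    using u_nonneg u_nondeg q_prob by (rule sum_exp_util_pos)
  have "(\<forall>p'\<in>prob_simplex m. exp_loss m (util_loss m l u) p q \<le> exp_loss m (util_loss m l u) p' q)
          \<longleftrightarrow> (\<forall>p'\<in>prob_simplex m.
                exp_loss m l p (util_prob m u q) \<le> exp_loss m l p' (util_prob m u q))"
    using S_pos by (simp add: exp_loss_util_loss_eq_scaled)
  also have "\<dots> \<longleftrightarrow> p = util_prob m u q"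
    using l_proper util_prob_in_simplex[OF u_nonneg u_nondeg q_prob] p_prob
    by (rule strictly_proper_minimizer_iff)
  finally show ?thesis .
qed

theorem theorem1:
  fixes m :: nat and u :: "nat \<Rightarrow> nat \<Rightarrow> real"
    and l :: "(nat \<Rightarrow> real) \<Rightarrow> nat \<Rightarrow> real" and q :: "nat \<Rightarrow> real"
  assumes m_pos: "m \<ge> 1"
    and u_nonneg: "\<forall>a\<in>{1..m}. \<forall>y\<in>{1..m}. 0 \<le> u a y"
    and u_nondeg: "\<forall>y\<in>{1..m}. \<exists>a\<in>{1..m}. u a y > 0"
    and l_proper: "strictly_proper m l"
    and q_prob: "q \<in> prob_simplex m"
  shows "(\<exists>!p. p \<in> prob_simplex m \<and>
            (\<forall>p'\<in>prob_simplex m. exp_loss m (util_loss m l u) p q \<le> exp_loss m (util_loss m l u) p' q))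
         \<and> (\<forall>p\<in>prob_simplex m.
            (\<forall>p'\<in>prob_simplex m. exp_loss m (util_loss m l u) p q \<le> exp_loss m (util_loss m l u) p' q)
            \<longrightarrow> (\<forall>y\<in>{1..m}. p y = exp_util m u y q / (\<Sum>y'\<in>{1..m}. exp_util m u y' q)))"
proof -
  note minimizer_iff = util_loss_minimizer_iff[OF u_nonneg u_nondeg l_proper q_prob]
  have "util_prob m u q \<in> prob_simplex m"
    using u_nonneg u_nondeg q_prob by (rule util_prob_in_simplex)
  then show ?thesis
    using minimizer_iff by (auto simp: util_prob_def)
qed

end
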